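(* Let $G$ be a connected undirected graph without self-loops on $n$ vertices with degrees $d_i$ and Laplacian $L$, let $C=\mathrm{diag}(c_1,\dots,c_n)$ with positive rationals $c_i$ encoded over $O(\log n)$ bits and $c_id_i<1$, and let $P=I_n-CL$. Then $P$ has real eigenvalues $1=\lambda_1>\lambda_2\ge\cdots\ge\lambda_n>-1$, and $\mu:=\max_{k>1}|\lambda_k|$ satisfies $\mu\le1-n^{-O(1)}$.
   Context: $O(\cdot)$ hides absolute constants; $n$ is assumed large. *)

theory Defs
  imports "Jordan_Normal_Form.Char_Poly"
begin

text \<open>Graph on vertex set {0..<n}, given by an adjacency predicate E.\<close>

definition undirected_loopless :: "nat \<Rightarrow> (nat \<Rightarrow> nat \<Rightarrow> bool) \<Rightarrow> bool" where
  "undirected_loopless n E \<longleftrightarrow> (\<forall>i j. E i j \<longrightarrow> E j i) \<and> (\<forall>i. \<not> E i i)"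

definition graph_connected :: "nat \<Rightarrow> (nat \<Rightarrow> nat \<Rightarrow> bool) \<Rightarrow> bool" where
  "graph_connected n E \<longleftrightarrow>
     (\<forall>i<n. \<forall>j<n. (\<lambda>a b. a < n \<and> b < n \<and> E a b)\<^sup>*\<^sup>* i j)"

definition vdegree :: "nat \<Rightarrow> (nat \<Rightarrow> nat \<Rightarrow> bool) \<Rightarrow> nat \<Rightarrow> nat" where
  "vdegree n E i = card {j. j < n \<and> E i j}"

definition laplacian :: "nat \<Rightarrow> (nat \<Rightarrow> nat \<Rightarrow> bool) \<Rightarrow> real mat" where
  "laplacian n E = mat n n (\<lambda>(i,j). (if i = j then real (vdegree n E i) else 0)
                                    - (if E i j then 1 else 0))"

definition diag_mat :: "nat \<Rightarrow> (nat \<Rightarrow> real) \<Rightarrow> real mat" where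
  "diag_mat n c = mat n n (\<lambda>(i,j). if i = j then c i else 0)"

text \<open>A positive rational encodable with O(log n) bits, i.e. with numerator
  and denominator bounded by n^K.\<close>
definition small_pos_rational :: "nat \<Rightarrow> nat \<Rightarrow> real \<Rightarrow> bool" where
  "small_pos_rational n K x \<longleftrightarrow>
     (\<exists>p q :: nat. 0 < p \<and> 0 < q \<and> p \<le> n ^ K \<and> q \<le> n ^ K \<and> x = real p / real q)"

end

theory Submission
  imports Defs
    "Jordan_Normal_Form.Jordan_Normal_Form_Existence"
    "Jordan_Normal_Form.Jordan_Normal_Form_Uniqueness"
    "HOL-Computational_Algebra.Fundamental_Theorem_Algebra"
begin

text \<open>
  For the weighted inner product \<open>\<langle>f, g\<rangle> = \<Sum>\<^sub>i f\<^sub>i g\<^sub>i / c\<^sub>i\<close> the matrix \<open>C L\<close> is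
  self-adjoint, and \<open>\<langle>f, C L f\<rangle> = \<Sum>\<^sub>i f\<^sub>i (L f)\<^sub>i\<close> is the Dirichlet form, half the sum of
  \<open>(f\<^sub>i - f\<^sub>j)\<^sup>2\<close> over the edges. Hence the eigenvalues of \<open>P = I - C L\<close> are real and at most 1.
  At a largest entry of an eigenvector, \<open>c\<^sub>i d\<^sub>i \<le> 1 - n\<^sup>-\<^sup>K\<close> gives the lower bound \<open>-1 + 2 n\<^sup>-\<^sup>K\<close>.
  An eigenvector for \<open>r \<noteq> 1\<close> is orthogonal to the constant vector, so it has an entry whose sign
  is opposite to that of a largest entry. A path of at most \<open>n\<^sup>2\<close> edges joins the two, so the
  Dirichlet form is at least \<open>max\<^sup>2 / (2 n\<^sup>4)\<close>, while the weighted norm is at most \<open>n\<^sup>K\<^sup>+\<^sup>1 max\<^sup>2\<close>;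
  hence \<open>r \<le> 1 - 1 / (2 n\<^sup>K\<^sup>+\<^sup>5)\<close>. Finally \<open>ker (P - I)\<^sup>2\<close> consists of constant vectors, so by
  the Jordan normal form the eigenvalue 1 is simple.
\<close>

interpretation of_real_poly: map_poly_inj_comm_ring_hom "of_real :: real \<Rightarrow> complex" ..

lemma order_prod_list_linear:
  "Polynomial.order a (\<Prod>r\<leftarrow>rs. [:- r, 1:]) = count (mset rs) (a :: 'a :: idom)"
proof (induction rs)
  case Nil
  then show ?case by (simp add: order_0I)
next
  case (Cons r rs)
  have nz: "(\<Prod>r\<leftarrow>rs. [:- r, 1:]) \<noteq> (0 :: 'a poly)"
    by (auto simp: prod_list_zero_iff)
  have "Polynomial.order a (\<Prod>r\<leftarrow>r # rs. [:- r, 1:]) =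
      Polynomial.order a ([:- r, 1:] * (\<Prod>r\<leftarrow>rs. [:- r, 1:]))"
    by simp
  also have "\<dots> = Polynomial.order a [:- r, 1:] + Polynomial.order a (\<Prod>r\<leftarrow>rs. [:- r, 1:])"
    by (rule order_mult) (metis nz mult_eq_0_iff pCons_eq_0_iff one_neq_zero)
  finally show ?case
    using Cons by (simp add: order_linear')
qed

lemma real_poly_eq_prod_linear_if_real_roots:
  fixes p :: "real poly"
  assumes monic: "lead_coeff p = 1"
    and real_roots: "\<And>z. poly (map_poly of_real p) z = 0 \<Longrightarrow> Im z = 0"
  shows "\<exists>rs. length rs = degree p \<and> p = (\<Prod>r\<leftarrow>rs. [:- r, 1:])"
proof -
  define q where "q = map_poly complex_of_real p"
  obtain zs where zs: "Polynomial.smult (lead_coeff q) (\<Prod>z\<leftarrow>zs. [:- z, 1:]) = q" "length zs = degree q"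
    using fundamental_theorem_algebra_factorized by blast
  have "lead_coeff q = 1"
    using monic by (simp add: q_def)
  then have q_eq: "q = (\<Prod>z\<leftarrow>zs. [:- z, 1:])"
    using zs(1) by simp
  have "z = of_real (Re z)" if "z \<in> set zs" for z
  proof -
    have "poly q z = 0"
      unfolding q_eq using that by (rule linear_poly_root)
    then show ?thesis
      using real_roots[of z] by (simp add: q_def complex_eq_iff)
  qed
  then have "q = (\<Prod>r\<leftarrow>map Re zs. [:- of_real r, 1:])"
    unfolding q_eq map_map o_def by (intro arg_cong[where f = prod_list] map_cong) auto
  also have "\<dots> = map_poly of_real (\<Prod>r\<leftarrow>map Re zs. [:- r, 1:])"
    unfolding of_real_poly.hom_prod_list map_map o_def
    by (intro arg_cong[where f = prod_list] map_cong) (auto simp: map_poly_pCons)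
  finally have "p = (\<Prod>r\<leftarrow>map Re zs. [:- r, 1:])"
    unfolding q_def of_real_poly.eq_iff .
  moreover have "length (map Re zs) = degree p"
    using zs(2) by (simp add: q_def)
  ultimately show ?thesis
    by blast
qed

lemma sum_list_le_1_if_sum_list_min_2_le_1:
  "0 \<notin> set xs \<Longrightarrow> sum_list (map (min 2) xs) \<le> (1 :: nat) \<Longrightarrow> sum_list xs \<le> 1"
proof (induction xs)
  case (Cons x xs)
  then show ?case
    by (cases xs) (auto simp: min_def split: if_splits)
qed simp

text \<open>A single Jordan block of size at least two for \<open>a\<close>, or two blocks, would already make the
  generalised eigenspace \<open>ker (A - a I)\<^sup>2\<close> at least two-dimensional.\<close>

lemma order_char_poly_le_1_if_dim_gen_eigenspace_le_1:
  assumes jnf: "jordan_nf A n_as" and dim: "dim_gen_eigenspace A a 2 \<le> 1"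
  shows "Polynomial.order a (char_poly A) \<le> 1"
proof -
  define xs where "xs = map fst (filter (\<lambda>na. snd na = a) n_as)"
  have "[(n, e)\<leftarrow>n_as. e = a] = filter (\<lambda>na. snd na = a) n_as"
    by (intro filter_cong) auto
  then have "sum_list (map (min 2) xs) \<le> 1"
    using dim unfolding dim_gen_eigenspace[OF jnf] xs_def by simp
  moreover have "0 \<notin> set xs"
    using jnf unfolding jordan_nf_def xs_def by auto
  ultimately show ?thesis
    unfolding jordan_nf_order[OF jnf] xs_def[symmetric]
    by (rule sum_list_le_1_if_sum_list_min_2_le_1[rotated])
qed

lemma sort_descending_nth_antimono:
  fixes xs :: "real list"
  assumes "i \<le> j" "j < length xs"
  shows "sort_key uminus xs ! j \<le> sort_key uminus xs ! i" (is "?ys ! j \<le> ?ys ! i")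
proof -
  have "sorted (map uminus ?ys)"
    by (rule sorted_sort_key)
  then have "map uminus ?ys ! i \<le> map uminus ?ys ! j"
    using assms by (intro sorted_nth_mono) auto
  with assms show ?thesis
    by simp
qed

lemma prod_list_eq_prod_nth_sort:
  "(\<Prod>r\<leftarrow>xs. f r) = (\<Prod>k<length xs. f (sort_key g xs ! k))"
proof -
  have "(\<Prod>k<length xs. f (sort_key g xs ! k)) = (\<Prod>r\<leftarrow>sort_key g xs. f r)"
    by (simp add: prod.list_conv_set_nth atLeast0LessThan)
  also have "\<dots> = (\<Prod>r\<leftarrow>xs. f r)"
    by (metis mset_sort prod_mset_prod_list mset_map)
  finally show ?thesis ..
qed

lemma sorted_roots_with_simple_top:
  fixes rs :: "real list"
  assumes len: "length rs = n" and n: "n \<ge> 2" and \<delta>: "\<delta> > 0"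
    and one: "1 \<in> set rs" and simple: "count (mset rs) 1 \<le> 1"
    and bounds: "\<And>r. r \<in> set rs \<Longrightarrow> -1 + \<delta> \<le> r \<and> r \<le> 1 \<and> (r \<noteq> 1 \<longrightarrow> r \<le> 1 - \<delta>)"
  shows "\<exists>lam. (\<Prod>r\<leftarrow>rs. [:- r, 1:]) = (\<Prod>k<n. [:- lam k, 1:]) \<and> lam 0 = 1 \<and> lam 1 < lam 0 \<and>
     (\<forall>k. 1 \<le> k \<and> k + 1 < n \<longrightarrow> lam (k + 1) \<le> lam k) \<and> - 1 < lam (n - 1) \<and>
     Max {\<bar>lam k\<bar> | k. 1 \<le> k \<and> k < n} \<le> 1 - \<delta>"
proof -
  define ys where "ys = sort_key uminus rs"
  define lam where "lam k = ys ! k" for k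
  have mono: "lam j \<le> lam i" if "i \<le> j" "j < n" for i j
    using sort_descending_nth_antimono[of i j rs] that len by (simp add: lam_def ys_def)
  have mset_ys: "mset ys = mset rs"
    by (simp add: ys_def)
  have len_ys: "length ys = n" and set_ys: "set ys = set rs"
    using len by (simp_all add: ys_def)
  have lam_in: "lam k \<in> set rs" if "k < n" for k
    using nth_mem[of k ys] that len_ys set_ys by (simp add: lam_def)
  have lam0: "lam 0 = 1"
  proof -
    obtain k where "k < n" "lam k = 1"
      using one len_ys unfolding set_ys[symmetric] in_set_conv_nth lam_def by blast
    then show ?thesis
      using mono[of 0 k] bounds[OF lam_in[of 0]] n by simp
  qed
  have lam1: "lam 1 \<noteq> 1"
  proof
    assume "lam 1 = 1"
    moreover obtain a b zs where "ys = a # b # zs"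
      using len_ys n by (cases ys; cases "tl ys") auto
    ultimately have "count (mset ys) 1 \<ge> 2"
      using lam0 by (simp add: lam_def)
    with simple mset_ys show False
      by simp
  qed
  have rest: "-1 + \<delta> \<le> lam k \<and> lam k \<le> 1 - \<delta>" if "1 \<le> k" "k < n" for k
  proof -
    have "lam k \<noteq> 1"
      using lam1 mono[of 1 k] bounds[OF lam_in[of 1]] that n by auto
    then show ?thesis
      using bounds[OF lam_in[of k]] that by auto
  qed
  have "1 \<le> n - 1" "n - 1 < n"
    using n by auto
  then have last: "- 1 < lam (n - 1)"
    using rest \<delta> by fastforce
  have "Max {\<bar>lam k\<bar> | k. 1 \<le> k \<and> k < n} \<le> 1 - \<delta>"
  proof (rule Max.boundedI)
    show "finite {\<bar>lam k\<bar> | k. 1 \<le> k \<and> k < n}"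
      by (rule finite_subset[of _ "(\<lambda>k. \<bar>lam k\<bar>) ` {..<n}"]) auto
    show "{\<bar>lam k\<bar> | k. 1 \<le> k \<and> k < n} \<noteq> {}"
      using n by auto
  qed (use rest in force)
  moreover have "(\<Prod>r\<leftarrow>rs. [:- r, 1:]) = (\<Prod>k<n. [:- lam k, 1:])"
    using prod_list_eq_prod_nth_sort[of "\<lambda>r. [:- r, 1:]" rs uminus] len by (simp add: lam_def ys_def)
  ultimately show ?thesis
    using lam0 lam1 last mono bounds[OF lam_in[of 1]] n
    by (intro exI[of _ lam]) (auto simp: less_le)
qed

lemma index_max_abs:
  fixes f :: "nat \<Rightarrow> real"
  assumes "\<exists>i<n. f i \<noteq> 0"
  obtains i where "i < n" "\<bar>f i\<bar> > 0" "\<And>j. j < n \<Longrightarrow> \<bar>f j\<bar> \<le> \<bar>f i\<bar>"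
proof -
  obtain i where i: "i < n" "\<bar>f i\<bar> = Max ((\<lambda>j. \<bar>f j\<bar>) ` {..<n})"
    using assms Max_in[of "(\<lambda>j. \<bar>f j\<bar>) ` {..<n}"] by fastforce
  then have le: "\<bar>f j\<bar> \<le> \<bar>f i\<bar>" if "j < n" for j
    using that by simp
  obtain j where "j < n" "f j \<noteq> 0"
    using assms by blast
  then have "\<bar>f i\<bar> > 0"
    using le[of j] by linarith
  with i(1) le show ?thesis
    using that by blast
qed

lemma small_pos_rational_bounds:
  assumes "small_pos_rational n K x" and "x * real d < 1"
  shows "x > 0" "1 / x \<le> real n ^ K" "x * real d \<le> 1 - 1 / real n ^ K"
proof -
  obtain p q :: nat where pq: "0 < p" "0 < q" "p \<le> n ^ K" "q \<le> n ^ K" and x: "x = real p / real q"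
    using assms(1) unfolding small_pos_rational_def by blast
  have q: "real q \<le> real n ^ K"
    using pq(4) by (metis of_nat_le_iff of_nat_power)
  show "x > 0"
    using pq x by simp
  have "1 / x = real q / real p"
    using x by simp
  also have "\<dots> \<le> real q"
    using pq by (simp add: divide_le_eq)
  finally show "1 / x \<le> real n ^ K"
    using q by linarith
  have "real (p * d) < real q"
    using assms(2) pq x by (simp add: divide_less_eq)
  then have "p * d + 1 \<le> q"
    by (simp only: of_nat_less_iff)
  then have "real p * real d \<le> real q - 1"
    by (metis add_le_imp_le_diff of_nat_add of_nat_le_iff of_nat_mult of_nat_1)
  then have "x * real d \<le> (real q - 1) / real q"
    unfolding x using pq by (simp add: divide_le_eq divide_right_mono)
  also have "\<dots> = 1 - 1 / real q"
    using pq by (simp add: field_simps)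
  also have "\<dots> \<le> 1 - 1 / real n ^ K"
    using pq q by (simp add: frac_le)
  finally show "x * real d \<le> 1 - 1 / real n ^ K" .
qed

lemma sum_delta_mult:
  assumes "finite A" "i \<in> A"
  shows "(\<Sum>k\<in>A. (if i = k then a else 0) * g k) = a * (g i :: 'a :: comm_semiring_1)"
proof -
  have "(\<Sum>k\<in>A. (if i = k then a else 0) * g k) = (\<Sum>k\<in>A. if k = i then a * g i else 0)"
    by (rule sum.cong) auto
  with assms show ?thesis
    by simp
qed

lemma map_mat_id [simp]: "map_mat id A = A"
  by (intro eq_matI) auto

locale sym_graph =
  fixes n :: nat and E :: "nat \<Rightarrow> nat \<Rightarrow> bool"
  assumes sym: "E i j \<Longrightarrow> E j i"
begin

definition lap :: "(nat \<Rightarrow> 'a :: comm_ring_1) \<Rightarrow> nat \<Rightarrow> 'a" where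
  "lap f i = (\<Sum>j<n. if E i j then f i - f j else 0)"

lemma sum_edges_swap:
  "(\<Sum>i<n. \<Sum>j<n. if E i j then F j i else 0) = (\<Sum>i<n. \<Sum>j<n. if E i j then F i j else 0)"
proof -
  have "(\<Sum>i<n. \<Sum>j<n. if E i j then F j i else 0) = (\<Sum>j<n. \<Sum>i<n. if E i j then F j i else 0)"
    by (rule sum.swap)
  also have "\<dots> = (\<Sum>j<n. \<Sum>i<n. if E j i then F j i else 0)"
    by (intro sum.cong refl) (metis sym)
  finally show ?thesis .
qed

lemma sum_lap_eq_0: "(\<Sum>i<n. lap f i) = 0"
proof -
  have "(\<Sum>i<n. lap f i) =
      (\<Sum>i<n. \<Sum>j<n. if E i j then f i else 0) - (\<Sum>i<n. \<Sum>j<n. if E i j then f j else 0)"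
    unfolding lap_def by (simp add: sum_subtractf[symmetric] if_distrib if_distribR)
      (intro sum.cong refl, auto)
  then show ?thesis
    using sum_edges_swap[of "\<lambda>i j. f j"] by simp
qed

lemma dirichlet_form:
  fixes f :: "nat \<Rightarrow> real"
  shows "(\<Sum>i<n. f i * lap f i) = (\<Sum>i<n. \<Sum>j<n. if E i j then (f i - f j)\<^sup>2 else 0) / 2"
proof -
  have "(\<Sum>i<n. f i * lap f i) = (\<Sum>i<n. \<Sum>j<n. if E i j then f i * (f i - f j) else 0)"
    unfolding lap_def sum_distrib_left by (intro sum.cong refl) simp
  moreover have "\<dots> = (\<Sum>i<n. \<Sum>j<n. if E i j then f j * (f j - f i) else 0)"
    using sum_edges_swap[of "\<lambda>i j. f i * (f i - f j)"] by simp
  ultimately have "2 * (\<Sum>i<n. f i * lap f i) =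
      (\<Sum>i<n. \<Sum>j<n. (if E i j then f i * (f i - f j) else 0) + (if E i j then f j * (f j - f i) else 0))"
    by (simp add: sum.distrib)
  also have "\<dots> = (\<Sum>i<n. \<Sum>j<n. if E i j then (f i - f j)\<^sup>2 else 0)"
    by (intro sum.cong refl) (simp add: power2_eq_square algebra_simps)
  finally show ?thesis
    by simp
qed

lemma dirichlet_form_complex:
  fixes f :: "nat \<Rightarrow> complex"
  shows "(\<Sum>i<n. cnj (f i) * lap f i) =
    of_real ((\<Sum>i<n. \<Sum>j<n. if E i j then (cmod (f i - f j))\<^sup>2 else 0) / 2)"
proof -
  have "(\<Sum>i<n. cnj (f i) * lap f i) = (\<Sum>i<n. \<Sum>j<n. if E i j then cnj (f i) * (f i - f j) else 0)"
    unfolding lap_def sum_distrib_left by (intro sum.cong refl) simp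
  moreover have "\<dots> = (\<Sum>i<n. \<Sum>j<n. if E i j then cnj (f j) * (f j - f i) else 0)"
    using sum_edges_swap[of "\<lambda>i j. cnj (f i) * (f i - f j)"] by simp
  ultimately have "2 * (\<Sum>i<n. cnj (f i) * lap f i) =
      (\<Sum>i<n. \<Sum>j<n. (if E i j then cnj (f i) * (f i - f j) else 0) +
                      (if E i j then cnj (f j) * (f j - f i) else 0))"
    by (simp add: sum.distrib)
  also have "\<dots> = (\<Sum>i<n. \<Sum>j<n. if E i j then of_real ((cmod (f i - f j))\<^sup>2) else 0)"
  proof (intro sum.cong refl)
    fix i j
    have "cnj (f i) * (f i - f j) + cnj (f j) * (f j - f i) = (f i - f j) * cnj (f i - f j)"
      by (simp add: algebra_simps)
    also have "\<dots> = of_real ((cmod (f i - f j))\<^sup>2)"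
      by (subst complex_norm_square) simp
    finally show "(if E i j then cnj (f i) * (f i - f j) else 0) + (if E i j then cnj (f j) * (f j - f i) else 0)
        = (if E i j then of_real ((cmod (f i - f j))\<^sup>2) else 0)"
      by simp
  qed
  also have "\<dots> = of_real (\<Sum>i<n. \<Sum>j<n. if E i j then (cmod (f i - f j))\<^sup>2 else 0)"
    unfolding of_real_sum by (intro sum.cong refl) simp
  finally show ?thesis
    by (simp add: mult.commute)
qed

lemma of_nat_vdegree: "(of_nat (vdegree n E i) :: 'a :: comm_semiring_1) = (\<Sum>j<n. if E i j then 1 else 0)"
proof -
  have "{j. j < n \<and> E i j} = {j \<in> {..<n}. E i j}"
    by auto
  then have "(of_nat (vdegree n E i) :: 'a) = (\<Sum>j\<in>{j \<in> {..<n}. E i j}. 1)"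
    unfolding vdegree_def by simp
  also have "\<dots> = (\<Sum>j<n. if E i j then 1 else 0)"
    by (rule sum.inter_filter) simp
  finally show ?thesis .
qed

lemma lap_conv_vdegree: "lap f i = of_nat (vdegree n E i) * f i - (\<Sum>j<n. if E i j then f j else 0)"
  unfolding of_nat_vdegree lap_def sum_distrib_right sum_subtractf[symmetric]
  by (intro sum.cong refl) simp

lemma edge_diff_le_dirichlet_form:
  fixes f :: "nat \<Rightarrow> real"
  assumes "a < n" "b < n" "E a b"
  shows "\<bar>f a - f b\<bar> \<le> sqrt (2 * (\<Sum>i<n. f i * lap f i))"
proof (rule real_le_rsqrt)
  have "(f a - f b)\<^sup>2 \<le> (\<Sum>j<n. if E a j then (f a - f j)\<^sup>2 else 0)"
    using member_le_sum[of b "{..<n}" "\<lambda>j. if E a j then (f a - f j)\<^sup>2 else 0"] assms by auto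
  also have "\<dots> \<le> (\<Sum>i<n. \<Sum>j<n. if E i j then (f i - f j)\<^sup>2 else 0)"
    using assms by (intro member_le_sum[where f = "\<lambda>i. \<Sum>j<n. if E i j then (f i - f j)\<^sup>2 else 0"])
      (auto intro!: sum_nonneg)
  finally show "\<bar>f a - f b\<bar>\<^sup>2 \<le> 2 * (\<Sum>i<n. f i * lap f i)"
    unfolding dirichlet_form by simp
qed

lemma dirichlet_form_nonneg: "0 \<le> (\<Sum>i<n. f i * lap f i :: real)"
  unfolding dirichlet_form by (auto intro!: sum_nonneg)

definition walk_mat :: "(nat \<Rightarrow> real) \<Rightarrow> real mat" where
  "walk_mat c = 1\<^sub>m n - diag_mat n c * laplacian n E"

lemma walk_mat_carrier: "walk_mat c \<in> carrier_mat n n"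
  unfolding walk_mat_def diag_mat_def laplacian_def by auto

lemma walk_mat_index:
  assumes "i < n" "j < n"
  shows "walk_mat c $$ (i, j) = (if i = j then 1 else 0) -
    c i * ((if i = j then real (vdegree n E i) else 0) - (if E i j then 1 else 0))"
  using assms unfolding walk_mat_def diag_mat_def laplacian_def
  by (simp add: scalar_prod_def sum_delta_mult)

lemma walk_mat_mult_vec:
  assumes v: "v \<in> carrier_vec n" and i: "i < n"
  shows "(map_mat (of_real :: real \<Rightarrow> 'a :: real_field) (walk_mat c) *\<^sub>v v) $ i =
    v $ i - of_real (c i) * lap (\<lambda>j. v $ j) i"
proof -
  have "(map_mat of_real (walk_mat c) *\<^sub>v v) $ i = (\<Sum>j<n. of_real (walk_mat c $$ (i, j)) * (v $ j :: 'a))"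
    using v i walk_mat_carrier[of c] by (auto simp: scalar_prod_def intro!: sum.cong)
  also have "\<dots> = (\<Sum>j<n. (if i = j then v $ j else 0) - of_real (c i) *
      ((if i = j then of_nat (vdegree n E i) * v $ j else 0) - (if E i j then v $ j else 0)))"
    by (intro sum.cong refl) (auto simp: walk_mat_index i algebra_simps)
  also have "\<dots> = v $ i - of_real (c i) * lap (\<lambda>j. v $ j) i"
    using i unfolding lap_conv_vdegree sum_subtractf sum_distrib_left[symmetric] by (simp add: sum.delta')
  finally show ?thesis .
qed

lemma eigenvector_walk_mat:
  assumes "eigenvector (map_mat (of_real :: real \<Rightarrow> 'a :: real_field) (walk_mat c)) v r"
  shows "\<exists>i<n. v $ i \<noteq> 0"
    and "\<And>i. i < n \<Longrightarrow> of_real (c i) * lap (\<lambda>j. v $ j) i = (1 - r) * v $ i"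
proof -
  have v: "v \<in> carrier_vec n" and v0: "v \<noteq> 0\<^sub>v n"
    and ev: "map_mat of_real (walk_mat c) *\<^sub>v v = r \<cdot>\<^sub>v v"
    using assms walk_mat_carrier[of c] unfolding eigenvector_def by auto
  show "\<exists>i<n. v $ i \<noteq> 0"
  proof (rule ccontr)
    assume "\<not> ?thesis"
    then have "v = 0\<^sub>v n"
      using v by (intro eq_vecI) auto
    with v0 show False ..
  qed
  fix i assume i: "i < n"
  have "(map_mat of_real (walk_mat c) *\<^sub>v v) $ i = r * v $ i"
    using ev v i by simp
  then show "of_real (c i) * lap (\<lambda>j. v $ j) i = (1 - r) * v $ i"
    unfolding walk_mat_mult_vec[OF v i] by (simp add: algebra_simps)
qed

lemma eigenvector_walk_mat_real:
  assumes "eigenvector (walk_mat c) v r"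
  shows "\<exists>i<n. v $ i \<noteq> 0" and "\<And>i. i < n \<Longrightarrow> c i * lap (\<lambda>j. v $ j) i = (1 - r) * v $ i"
  using eigenvector_walk_mat[of c v r] assms by simp_all

definition ones :: "real vec" where "ones = vec n (\<lambda>_. 1)"

lemma lap_ones: "lap (\<lambda>j. ones $ j) i = 0" if "i < n"
  using that unfolding lap_def ones_def by (intro sum.neutral) auto

lemma char_matrix_walk_mat_mult_vec:
  assumes v: "v \<in> carrier_vec n" and i: "i < n"
  shows "(char_matrix (walk_mat c) 1 *\<^sub>v v) $ i = - (c i * lap (\<lambda>j. v $ j) i)"
proof -
  have "char_matrix (walk_mat c) 1 *\<^sub>v v = walk_mat c *\<^sub>v v + ((-1) \<cdot>\<^sub>m 1\<^sub>m n) *\<^sub>v v"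
    unfolding char_matrix_def using walk_mat_carrier[of c] v by (simp add: add_mult_distrib_mat_vec)
  then show ?thesis
    using walk_mat_mult_vec[OF v i, of c] v i walk_mat_carrier[of c] by simp
qed

end

locale connected_graph = sym_graph +
  assumes connected: "graph_connected n E" and n_pos: "n > 0"
begin

lemma diff_le_along_path:
  fixes f :: "nat \<Rightarrow> real"
  assumes edge: "\<And>a b. a < n \<Longrightarrow> b < n \<Longrightarrow> E a b \<Longrightarrow> \<bar>f a - f b\<bar> \<le> s"
    and s: "s \<ge> 0" and i: "i < n" and j: "j < n"
  shows "\<bar>f i - f j\<bar> \<le> real n ^ 2 * s"
proof -
  define R where "R = {(a, b). a < n \<and> b < n \<and> E a b}"
  have path: "\<bar>f x - f y\<bar> \<le> m * s" if "(x, y) \<in> R ^^ m" for x y m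
    using that
  proof (induction m arbitrary: y)
    case (Suc m)
    then obtain z where "(x, z) \<in> R ^^ m" "(z, y) \<in> R"
      by auto
    then have "\<bar>f x - f z\<bar> + \<bar>f z - f y\<bar> \<le> m * s + s"
      using Suc.IH edge unfolding R_def by (intro add_mono) auto
    then show ?case
      by (simp add: algebra_simps)
  qed simp
  have R_sub: "R \<subseteq> {..<n} \<times> {..<n}"
    by (auto simp: R_def)
  then have fin: "finite R"
    by (rule finite_subset) simp
  have "(i, j) \<in> R\<^sup>*"
    using connected i j unfolding graph_connected_def R_def by (simp add: rtranclp_rtrancl_eq[symmetric])
  then obtain m where m: "m \<le> card R" "(i, j) \<in> R ^^ m"
    unfolding rtrancl_finite_eq_relpow[OF fin] by auto
  moreover have "card R \<le> n * n"
    using card_mono[OF _ R_sub] by (simp add: card_cartesian_product)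
  ultimately have "real m \<le> real n ^ 2"
    by (simp add: power2_eq_square flip: of_nat_mult)
  then show ?thesis
    using path[OF m(2)] mult_right_mono[OF _ s] by (meson order_trans)
qed

lemma const_if_lap_eq_0:
  fixes f :: "nat \<Rightarrow> real"
  assumes "\<And>i. i < n \<Longrightarrow> lap f i = 0" and "i < n" "j < n"
  shows "f i = f j"
  using diff_le_along_path[of f 0 i j] edge_diff_le_dirichlet_form[of _ _ f] assms by simp

lemma sq_le_dirichlet_form_if_opposite_signs:
  fixes f :: "nat \<Rightarrow> real"
  assumes i: "i < n" and j: "j < n" and opposite: "f i * f j \<le> 0"
  shows "(f i)\<^sup>2 \<le> 2 * real n ^ 4 * (\<Sum>k<n. f k * lap f k)"
proof -
  define Q where "Q = (\<Sum>k<n. f k * lap f k)"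
  have "\<bar>f i - f j\<bar> \<le> real n ^ 2 * sqrt (2 * Q)"
    unfolding Q_def
    by (rule diff_le_along_path[OF edge_diff_le_dirichlet_form _ i j]) (use dirichlet_form_nonneg in auto)
  then have "(f i - f j)\<^sup>2 \<le> (real n ^ 2 * sqrt (2 * Q))\<^sup>2"
    by (metis abs_ge_zero power2_abs power_mono)
  moreover have "(f i)\<^sup>2 \<le> (f i - f j)\<^sup>2"
    using opposite zero_le_power2[of "f j"] unfolding power2_diff by linarith
  moreover have "(real n ^ 2 * sqrt (2 * Q))\<^sup>2 = 2 * real n ^ 4 * Q"
    using dirichlet_form_nonneg[of f] unfolding Q_def by (simp add: power_mult_distrib)
  ultimately show ?thesis
    unfolding Q_def by linarith
qed

end

locale lazy_walk = connected_graph +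
  fixes c :: "nat \<Rightarrow> real" and B :: real
  assumes c_pos: "i < n \<Longrightarrow> c i > 0"
    and c_inverse_le: "i < n \<Longrightarrow> 1 / c i \<le> B"
    and c_vdegree_le: "i < n \<Longrightarrow> c i * real (vdegree n E i) \<le> 1 - 1 / B"
    and B_ge_1: "B \<ge> 1"
begin

lemma eigenvalue_complex_real:
  assumes "eigenvector (map_mat complex_of_real (walk_mat c)) v r"
  shows "Im r = 0"
proof -
  define f where "f j = v $ j" for j
  note eq = eigenvector_walk_mat[OF assms, folded f_def]
  define W where "W = (\<Sum>i<n. (cmod (f i))\<^sup>2 / c i)"
  obtain i where i: "i < n" "f i \<noteq> 0"
    using eq(1) by auto
  have "0 < (cmod (f i))\<^sup>2 / c i"
    using i c_pos by simp
  also have "\<dots> \<le> W"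
    unfolding W_def using i c_pos by (intro member_le_sum) (auto intro!: divide_nonneg_pos)
  finally have W_pos: "W > 0" .
  have "cnj (f i) * lap f i = (1 - r) * of_real ((cmod (f i))\<^sup>2 / c i)" if "i < n" for i
  proof -
    have "of_real (c i) * (cnj (f i) * lap f i) = cnj (f i) * (of_real (c i) * lap f i)"
      by (simp add: ac_simps)
    also have "\<dots> = (1 - r) * (f i * cnj (f i))"
      using eq(2)[OF that] by (simp add: ac_simps)
    also have "\<dots> = (1 - r) * of_real ((cmod (f i))\<^sup>2)"
      by (subst complex_norm_square) simp
    finally show ?thesis
      using c_pos[OF that] by (simp add: field_simps)
  qed
  then have "(1 - r) * of_real W = (\<Sum>i<n. cnj (f i) * lap f i)"
    unfolding W_def of_real_sum sum_distrib_left by simp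
  then have "1 - r = of_real ((\<Sum>i<n. \<Sum>j<n. if E i j then (cmod (f i - f j))\<^sup>2 else 0) / 2 / W)"
    using W_pos unfolding dirichlet_form_complex by (simp add: field_simps)
  then have "Im (1 - r) = 0"
    by simp
  then show ?thesis
    by simp
qed

lemma lap_eigenvector:
  assumes "eigenvector (walk_mat c) v r" and "i < n"
  shows "lap (\<lambda>j. v $ j) i = (1 - r) * v $ i / c i"
  using eigenvector_walk_mat_real(2)[OF assms] c_pos[OF assms(2)] by (simp add: eq_divide_eq mult.commute)

lemma eigenvalue_ge:
  assumes "eigenvector (walk_mat c) v r"
  shows "-1 + 2 / B \<le> r"
proof -
  define f where "f j = v $ j" for j
  obtain i where i: "i < n" "\<bar>f i\<bar> > 0" "\<And>j. j < n \<Longrightarrow> \<bar>f j\<bar> \<le> \<bar>f i\<bar>"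
    using index_max_abs eigenvector_walk_mat_real(1)[OF assms] unfolding f_def by blast
  have "(1 - r) * (f i)\<^sup>2 = f i * (c i * lap f i)"
    using lap_eigenvector[OF assms i(1)] c_pos[OF i(1)] unfolding f_def by (simp add: power2_eq_square)
  also have "\<dots> = c i * (\<Sum>j<n. if E i j then (f i)\<^sup>2 - f i * f j else 0)"
    unfolding lap_def sum_distrib_left by (intro sum.cong refl) (simp add: power2_eq_square algebra_simps)
  also have "\<dots> \<le> c i * (\<Sum>j<n. if E i j then 2 * (f i)\<^sup>2 else 0)"
  proof (intro mult_left_mono sum_mono)
    fix j assume "j \<in> {..<n}"
    then have "\<bar>f i * f j\<bar> \<le> \<bar>f i\<bar> * \<bar>f i\<bar>"
      using i(3)[of j] unfolding abs_mult by (intro mult_left_mono) auto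
    then have "- (f i * f j) \<le> (f i)\<^sup>2"
      by (simp add: power2_eq_square abs_le_iff)
    then show "(if E i j then (f i)\<^sup>2 - f i * f j else 0) \<le> (if E i j then 2 * (f i)\<^sup>2 else 0)"
      by auto
  qed (use c_pos[OF i(1)] in simp)
  also have "\<dots> = 2 * (c i * real (vdegree n E i)) * (f i)\<^sup>2"
    unfolding of_nat_vdegree sum_distrib_left sum_distrib_right by (intro sum.cong refl) simp
  also have "\<dots> \<le> 2 * (1 - 1 / B) * (f i)\<^sup>2"
    using c_vdegree_le[OF i(1)] by (intro mult_right_mono) auto
  finally have "(1 - r) * (f i)\<^sup>2 \<le> 2 * (1 - 1 / B) * (f i)\<^sup>2" .
  moreover have "(f i)\<^sup>2 > 0"
    using i(2) by simp
  ultimately have "1 - r \<le> 2 * (1 - 1 / B)"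
    by (rule mult_right_le_imp_le)
  then show ?thesis
    by (simp add: algebra_simps)
qed

lemma rayleigh_quotient:
  assumes "eigenvector (walk_mat c) v r"
  shows "(\<Sum>i<n. v $ i * lap (\<lambda>j. v $ j) i) = (1 - r) * (\<Sum>i<n. (v $ i)\<^sup>2 / c i)"
  unfolding sum_distrib_left
  using lap_eigenvector[OF assms] by (intro sum.cong refl) (simp add: power2_eq_square)

lemma eigenvalue_le_1:
  assumes "eigenvector (walk_mat c) v r"
  shows "r \<le> 1"
proof -
  obtain i where "i < n" "v $ i \<noteq> 0"
    using eigenvector_walk_mat_real(1)[OF assms] by blast
  then have "(\<Sum>i<n. (v $ i)\<^sup>2 / c i) > 0"
    using c_pos by (intro sum_pos2[of _ i]) (auto intro!: divide_nonneg_pos)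
  then show ?thesis
    using rayleigh_quotient[OF assms] dirichlet_form_nonneg[of "\<lambda>j. v $ j"]
    by (simp add: zero_le_mult_iff)
qed

lemma eigenvector_weighted_orthogonal_ones:
  assumes "eigenvector (walk_mat c) v r" and "r \<noteq> 1"
  shows "(\<Sum>i<n. v $ i / c i) = 0"
proof -
  have "(1 - r) * (\<Sum>i<n. v $ i / c i) = (\<Sum>i<n. lap (\<lambda>j. v $ j) i)"
    unfolding sum_distrib_left using lap_eigenvector[OF assms(1)] by (intro sum.cong refl) simp
  with assms(2) show ?thesis
    by (simp add: sum_lap_eq_0)
qed

lemma eigenvector_changes_sign:
  assumes ev: "eigenvector (walk_mat c) v r" and r: "r \<noteq> 1" and i: "i < n"
  shows "\<exists>j<n. v $ i * v $ j \<le> 0"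
proof (rule ccontr)
  assume "\<not> ?thesis"
  then have "0 < v $ i * v $ j / c j" if "j < n" for j
    using that c_pos[OF that] by (simp add: not_le)
  then have "0 < (\<Sum>j<n. v $ i * v $ j / c j)"
    using i by (intro sum_pos) auto
  also have "\<dots> = v $ i * (\<Sum>j<n. v $ j / c j)"
    by (simp add: sum_distrib_left)
  finally show False
    using eigenvector_weighted_orthogonal_ones[OF ev r] by simp
qed

lemma weighted_norm_le:
  fixes f :: "nat \<Rightarrow> real"
  assumes "\<And>k. k < n \<Longrightarrow> \<bar>f k\<bar> \<le> M"
  shows "(\<Sum>k<n. (f k)\<^sup>2 / c k) \<le> real n * (B * M\<^sup>2)"
proof -
  have "(\<Sum>k<n. (f k)\<^sup>2 / c k) \<le> real (card {..<n}) * (B * M\<^sup>2)"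
  proof (rule sum_bounded_above)
    fix k assume k: "k \<in> {..<n}"
    then have "(f k)\<^sup>2 \<le> M\<^sup>2"
      using assms[of k] by (metis lessThan_iff abs_ge_zero power2_abs power_mono)
    then have "1 / c k * (f k)\<^sup>2 \<le> B * M\<^sup>2"
      using c_inverse_le[of k] c_pos[of k] B_ge_1 k by (intro mult_mono) auto
    then show "(f k)\<^sup>2 / c k \<le> B * M\<^sup>2"
      by simp
  qed
  then show ?thesis
    by simp
qed

lemma eigenvalue_gap:
  assumes ev: "eigenvector (walk_mat c) v r" and r: "r \<noteq> 1"
  shows "r \<le> 1 - 1 / (2 * real n ^ 5 * B)"
proof -
  define f where "f j = v $ j" for j
  obtain i where i: "i < n" "\<bar>f i\<bar> > 0" "\<And>j. j < n \<Longrightarrow> \<bar>f j\<bar> \<le> \<bar>f i\<bar>"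
    using index_max_abs eigenvector_walk_mat_real(1)[OF ev] unfolding f_def by blast
  obtain j where j: "j < n" "f i * f j \<le> 0"
    using eigenvector_changes_sign[OF ev r i(1)] unfolding f_def by blast
  have "1 - r \<ge> 0"
    using eigenvalue_le_1[OF ev] by simp
  have "1 * (f i)\<^sup>2 \<le> 2 * real n ^ 4 * (\<Sum>k<n. f k * lap f k)"
    using sq_le_dirichlet_form_if_opposite_signs[OF i(1) j] by simp
  also have "\<dots> = 2 * real n ^ 4 * ((1 - r) * (\<Sum>k<n. (f k)\<^sup>2 / c k))"
    using rayleigh_quotient[OF ev] unfolding f_def by simp
  also have "\<dots> \<le> 2 * real n ^ 4 * ((1 - r) * (real n * (B * \<bar>f i\<bar>\<^sup>2)))"
    using weighted_norm_le[of f "\<bar>f i\<bar>"] i(3) \<open>1 - r \<ge> 0\<close> by (intro mult_left_mono) auto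
  also have "\<dots> = (2 * real n ^ 5 * B * (1 - r)) * (f i)\<^sup>2"
    by (simp add: power_Suc algebra_simps eval_nat_numeral)
  finally have "1 * (f i)\<^sup>2 \<le> (2 * real n ^ 5 * B * (1 - r)) * (f i)\<^sup>2" .
  then have "1 \<le> 2 * real n ^ 5 * B * (1 - r)"
    by (rule mult_right_le_imp_le) (use i(2) in simp)
  moreover have "2 * real n ^ 5 * B > 0"
    using n_pos B_ge_1 by simp
  ultimately have "1 / (2 * real n ^ 5 * B) \<le> 1 - r"
    by (simp add: divide_le_eq ac_simps)
  then show ?thesis
    by simp
qed

lemma char_matrix_walk_mat_kernel_const:
  assumes y: "y \<in> carrier_vec n" and "char_matrix (walk_mat c) 1 *\<^sub>v y = 0\<^sub>v n" and i: "i < n"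
  shows "y $ i = y $ 0"
proof -
  have "c i * lap (\<lambda>j. y $ j) i = 0" if "i < n" for i
    using char_matrix_walk_mat_mult_vec[OF y that, of c] assms(2) that by simp
  then have "lap (\<lambda>j. y $ j) i = 0" if "i < n" for i
    using c_pos that by fastforce
  then show ?thesis
    using const_if_lap_eq_0 i n_pos by blast
qed

lemma gen_eigenspace_1_const:
  assumes x: "x \<in> mat_kernel (char_matrix (walk_mat c) 1 ^\<^sub>m 2)"
  shows "x = x $ 0 \<cdot>\<^sub>v ones"
proof -
  let ?M = "char_matrix (walk_mat c) 1"
  have M: "?M \<in> carrier_mat n n"
    using walk_mat_carrier by simp
  then have "?M ^\<^sub>m 2 \<in> carrier_mat n n"
    by simp
  then have xc: "x \<in> carrier_vec n" and "(?M * ?M) *\<^sub>v x = 0\<^sub>v n"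
    using mat_kernelD[OF _ x] by (auto simp: numeral_2_eq_2)
  define y where "y = ?M *\<^sub>v x"
  have yc: "y \<in> carrier_vec n"
    unfolding y_def using M xc by simp
  have "?M *\<^sub>v y = 0\<^sub>v n"
    unfolding y_def using \<open>(?M * ?M) *\<^sub>v x = 0\<^sub>v n\<close> M xc by (simp add: assoc_mult_mat_vec)
  then have y_const: "y $ i = y $ 0" if "i < n" for i
    using char_matrix_walk_mat_kernel_const[OF yc _ that] by blast
  txt \<open>\<open>y = - C L x\<close> is constant while \<open>L x\<close> sums to zero, so \<open>y = 0\<close>.\<close>
  have lap_x: "lap (\<lambda>j. x $ j) i = - y $ 0 / c i" if "i < n" for i
    using char_matrix_walk_mat_mult_vec[OF xc that, of c] y_const[OF that] c_pos[OF that]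
    unfolding y_def by (simp add: field_simps)
  have "- y $ 0 * (\<Sum>i<n. 1 / c i) = (\<Sum>i<n. lap (\<lambda>j. x $ j) i)"
    unfolding sum_distrib_left by (intro sum.cong refl) (simp add: lap_x)
  moreover have "(\<Sum>i<n. 1 / c i) > 0"
    using n_pos c_pos by (intro sum_pos) auto
  ultimately have "y $ 0 = 0"
    by (simp add: sum_lap_eq_0)
  then have "lap (\<lambda>j. x $ j) i = 0" if "i < n" for i
    using lap_x[OF that] by simp
  then have x_const: "x $ i = x $ 0" if "i < n" for i
    using const_if_lap_eq_0 that n_pos by blast
  show ?thesis
  proof (rule eq_vecI)
    fix i assume "i < dim_vec (x $ 0 \<cdot>\<^sub>v ones)"
    then show "x $ i = (x $ 0 \<cdot>\<^sub>v ones) $ i"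
      using x_const[of i] by (simp add: ones_def)
  qed (use xc in \<open>simp add: ones_def\<close>)
qed

lemma dim_gen_eigenspace_1_le_1: "dim_gen_eigenspace (walk_mat c) 1 2 \<le> 1"
proof -
  let ?M = "char_matrix (walk_mat c) 1"
  have M: "?M \<in> carrier_mat n n"
    using walk_mat_carrier by simp
  interpret K: kernel n n "?M ^\<^sub>m 2"
    by unfold_locales (use M in simp)
  have ones: "ones \<in> carrier_vec n"
    by (simp add: ones_def)
  have "?M *\<^sub>v ones = 0\<^sub>v n"
    using char_matrix_walk_mat_mult_vec[OF ones, where c = c] lap_ones M by (intro eq_vecI) auto
  moreover have "?M *\<^sub>v 0\<^sub>v n = 0\<^sub>v n"
    using M by (intro eq_vecI) auto
  ultimately have "(?M * ?M) *\<^sub>v ones = 0\<^sub>v n"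
    using M ones by (simp add: assoc_mult_mat_vec)
  then have ones_in: "ones \<in> mat_kernel (?M ^\<^sub>m 2)"
    using M ones by (intro mat_kernelI[of _ n n]) (auto simp: numeral_2_eq_2)
  have "mat_kernel (?M ^\<^sub>m 2) \<subseteq> K.span {ones}"
  proof
    fix x assume "x \<in> mat_kernel (?M ^\<^sub>m 2)"
    then have "x = x $ 0 \<cdot>\<^sub>v ones"
      by (rule gen_eigenspace_1_const)
    moreover have "x $ 0 \<cdot>\<^sub>v ones \<in> K.span {ones}"
      using ones_in K.Ker.in_own_span[of "{ones}"]
        submodule.smult_closed[OF K.Ker.span_is_submodule[of "{ones}"]] by simp
    ultimately show "x \<in> K.span {ones}"
      by simp
  qed
  then have "K.span {ones} = mat_kernel (?M ^\<^sub>m 2)"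
    using K.Ker.span_is_subset2 ones_in by blast
  then have "K.dim \<le> card {ones}"
    using ones_in by (intro K.Ker.gen_ge_dim) auto
  then show ?thesis
    unfolding dim_gen_eigenspace_def by simp
qed

lemma eigenvector_ones: "eigenvector (walk_mat c) ones 1"
proof -
  have "walk_mat c *\<^sub>v ones = 1 \<cdot>\<^sub>v ones"
    using walk_mat_mult_vec[of ones _ c] lap_ones walk_mat_carrier[of c]
    by (intro eq_vecI) (auto simp: ones_def)
  moreover have "ones \<noteq> 0\<^sub>v n"
    using n_pos by (metis index_vec index_zero_vec(1) ones_def zero_neq_one)
  ultimately show ?thesis
    unfolding eigenvector_def using walk_mat_carrier[of c] by (simp add: ones_def)
qed

lemma char_poly_walk_mat_linear_factors:
  "\<exists>rs. length rs = n \<and> char_poly (walk_mat c) = (\<Prod>r\<leftarrow>rs. [:- r, 1:])"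
proof -
  have A: "walk_mat c \<in> carrier_mat n n"
    by (rule walk_mat_carrier)
  have "Im z = 0" if "poly (map_poly of_real (char_poly (walk_mat c))) z = 0" for z
  proof -
    have "eigenvalue (map_mat complex_of_real (walk_mat c)) z"
      using that A by (simp add: eigenvalue_root_char_poly of_real_hom.char_poly_hom)
    then show ?thesis
      unfolding eigenvalue_def using eigenvalue_complex_real by blast
  qed
  then show ?thesis
    using real_poly_eq_prod_linear_if_real_roots[of "char_poly (walk_mat c)"]
      degree_monic_char_poly[OF A] by simp
qed

lemma eigenvalue_bounds:
  assumes v: "eigenvector (walk_mat c) v r"
  shows "-1 + 1 / (2 * real n ^ 5 * B) \<le> r \<and> r \<le> 1 \<and> (r \<noteq> 1 \<longrightarrow> r \<le> 1 - 1 / (2 * real n ^ 5 * B))"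
proof -
  have "1 \<le> real n ^ 5"
    using n_pos by (intro one_le_power) simp
  then have "1 / (2 * real n ^ 5) \<le> 2"
    by (simp add: divide_le_eq)
  then have "1 / (2 * real n ^ 5) / B \<le> 2 / B"
    using B_ge_1 by (intro divide_right_mono) auto
  then have "-1 + 1 / (2 * real n ^ 5 * B) \<le> r"
    using eigenvalue_ge[OF v] by (simp add: divide_divide_eq_left)
  then show ?thesis
    using eigenvalue_le_1[OF v] eigenvalue_gap[OF v] by blast
qed

lemma count_linear_factor_1_le_1:
  assumes cp: "char_poly (walk_mat c) = (\<Prod>r\<leftarrow>rs. [:- r, 1:])"
  shows "count (mset rs) 1 \<le> 1"
proof -
  obtain n_as where "jordan_nf (walk_mat c) n_as"
    using jordan_nf_exists[OF walk_mat_carrier cp] by blast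
  then have "Polynomial.order 1 (char_poly (walk_mat c)) \<le> 1"
    using dim_gen_eigenspace_1_le_1 by (rule order_char_poly_le_1_if_dim_gen_eigenspace_le_1)
  then show ?thesis
    unfolding cp order_prod_list_linear .
qed

lemma walk_mat_spectrum:
  assumes n: "n \<ge> 2"
  shows "\<exists>lam. char_poly (walk_mat c) = (\<Prod>k<n. [:- lam k, 1:]) \<and> lam 0 = 1 \<and> lam 1 < lam 0 \<and>
     (\<forall>k. 1 \<le> k \<and> k + 1 < n \<longrightarrow> lam (k + 1) \<le> lam k) \<and> - 1 < lam (n - 1) \<and>
     Max {\<bar>lam k\<bar> | k. 1 \<le> k \<and> k < n} \<le> 1 - 1 / (2 * real n ^ 5 * B)"
proof -
  obtain rs where len: "length rs = n" and cp: "char_poly (walk_mat c) = (\<Prod>r\<leftarrow>rs. [:- r, 1:])"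
    using char_poly_walk_mat_linear_factors by blast
  have "poly (\<Prod>r\<leftarrow>rs. [:- r, 1:]) x = 0 \<longleftrightarrow> x \<in> set rs" for x
    by (auto simp: poly_prod_list_zero_iff)
  then have eigen_iff: "r \<in> set rs \<longleftrightarrow> (\<exists>v. eigenvector (walk_mat c) v r)" for r
    using eigenvalue_root_char_poly[OF walk_mat_carrier, of c r] unfolding cp eigenvalue_def by simp
  have "1 / (2 * real n ^ 5 * B) > 0"
    using n B_ge_1 by simp
  moreover have "1 \<in> set rs"
    using eigenvector_ones unfolding eigen_iff by blast
  moreover have "count (mset rs) 1 \<le> 1"
    using cp by (rule count_linear_factor_1_le_1)
  moreover have "-1 + 1 / (2 * real n ^ 5 * B) \<le> r \<and> r \<le> 1 \<and> (r \<noteq> 1 \<longrightarrow> r \<le> 1 - 1 / (2 * real n ^ 5 * B))"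
    if "r \<in> set rs" for r
    using that eigenvalue_bounds unfolding eigen_iff by blast
  ultimately show ?thesis
    unfolding cp by (rule sorted_roots_with_simple_top[OF len n])
qed

end

lemma walk_mat_spectrum_small_rational_weights:
  assumes n: "n \<ge> 2" and loopless: "undirected_loopless n E" and conn: "graph_connected n E"
    and c: "\<And>i. i < n \<Longrightarrow> small_pos_rational n K (c i) \<and> c i * real (vdegree n E i) < 1"
  shows "\<exists>lam. char_poly (1\<^sub>m n - diag_mat n c * laplacian n E) = (\<Prod>k<n. [:- lam k, 1:]) \<and>
    lam 0 = 1 \<and> lam 1 < lam 0 \<and> (\<forall>k. 1 \<le> k \<and> k + 1 < n \<longrightarrow> lam (k + 1) \<le> lam k) \<and>
    - 1 < lam (n - 1) \<and> Max {\<bar>lam k\<bar> | k. 1 \<le> k \<and> k < n} \<le> 1 - 1 / real n ^ (K + 6)"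
proof -
  have c_bounds: "c i > 0" "1 / c i \<le> real n ^ K" "c i * real (vdegree n E i) \<le> 1 - 1 / real n ^ K"
    if "i < n" for i
    using small_pos_rational_bounds[of n K "c i" "vdegree n E i"] c[OF that] by auto
  interpret lazy_walk n E c "real n ^ K"
  proof unfold_locales
    show "E j i" if "E i j" for i j
      using loopless that by (simp add: undirected_loopless_def)
    show "1 \<le> real n ^ K"
      using n by (intro one_le_power) simp
  qed (use n conn c_bounds in simp_all)
  obtain lam where spec: "char_poly (walk_mat c) = (\<Prod>k<n. [:- lam k, 1:]) \<and> lam 0 = 1 \<and> lam 1 < lam 0 \<and>
      (\<forall>k. 1 \<le> k \<and> k + 1 < n \<longrightarrow> lam (k + 1) \<le> lam k) \<and> - 1 < lam (n - 1)"
    and max: "Max {\<bar>lam k\<bar> | k. 1 \<le> k \<and> k < n} \<le> 1 - 1 / (2 * real n ^ 5 * real n ^ K)"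
    using walk_mat_spectrum[OF n] by blast
  have "2 * real n ^ 5 * real n ^ K \<le> real n ^ (K + 6)"
    using n by (simp add: power_add eval_nat_numeral)
  then have "1 / real n ^ (K + 6) \<le> 1 / (2 * real n ^ 5 * real n ^ K)"
    using n by (intro divide_left_mono) auto
  with max have "Max {\<bar>lam k\<bar> | k. 1 \<le> k \<and> k < n} \<le> 1 - 1 / real n ^ (K + 6)"
    by linarith
  with spec show ?thesis
    unfolding walk_mat_def by blast
qed

theorem lemma3p7:
  "\<forall>K::nat. \<exists>K'::nat. \<exists>N0::nat. \<forall>n::nat. \<forall>E c.
     n \<ge> N0 \<and> n \<ge> 2 \<and> undirected_loopless n E \<and> graph_connected n E \<and>
     (\<forall>i<n. small_pos_rational n K (c i) \<and> c i * real (vdegree n E i) < 1)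
     \<longrightarrow>
     (let P = 1\<^sub>m n - diag_mat n c * laplacian n E in
      \<exists>lam::nat \<Rightarrow> real.
        char_poly P = (\<Prod>k<n. [:- lam k, 1:]) \<and>
        lam 0 = 1 \<and> lam 1 < lam 0 \<and>
        (\<forall>k. 1 \<le> k \<and> k + 1 < n \<longrightarrow> lam (k + 1) \<le> lam k) \<and>
        - 1 < lam (n - 1) \<and>
        Max {\<bar>lam k\<bar> | k. 1 \<le> k \<and> k < n} \<le> 1 - 1 / real n ^ K')"
  unfolding Let_def using walk_mat_spectrum_small_rational_weights by blast

end
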